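(* For every metric space $M$, $\dim_{\mathrm{Box}}(M)\le\dim_{\mathrm{MST}}(M)$.
   Context: A minimal spanning tree (MST) on a finite set of points in a metric space is a spanning tree of the complete graph on those points that minimizes the sum of the edge lengths; for an edge $e$, $\|e\|$ is the distance between its endpoints, and for a tree $T$ and $d\ge 0$, $E_d(T)=\sum_{e\in T}\|e\|^d$. The MST dimension is \[ \dim_{\mathrm{MST}}(M):=\inf\{d\ge 0:\ \exists C<\infty \text{ such that } E_d(T)\le C \text{ for every MST } T \text{ on any finite set of distinct points of } M\}, \] with $\inf\emptyset=\infty$. For $\epsilon>0$ let $N(\epsilon)\in\{0,1,2,\dots\}\cup\{\infty\}$ be the maximal number of pairwise disjoint open balls of radius $\epsilon$ centered at points of $M$. The upper box dimension is \[ \dim_{\mathrm{Box}}(M):=\limsup_{\epsilon\to0}\frac{\log N(\epsilon)}{\log(1/\epsilon)}. \] *)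

theory Defs
  imports "HOL-Analysis.Analysis" "HOL-Library.Extended_Nat"
begin

definition complete_edges :: "'a set \<Rightarrow> 'a set set" where
  "complete_edges S = {{x, y} | x y. x \<in> S \<and> y \<in> S \<and> x \<noteq> y}"

definition adj :: "'a set set \<Rightarrow> 'a \<Rightarrow> 'a \<Rightarrow> bool" where
  "adj T x y \<longleftrightarrow> {x, y} \<in> T"

definition graph_connected :: "'a set \<Rightarrow> 'a set set \<Rightarrow> bool" where
  "graph_connected S T \<longleftrightarrow> (\<forall>x\<in>S. \<forall>y\<in>S. (adj T)\<^sup>*\<^sup>* x y)"

definition is_cycle :: "'a set set \<Rightarrow> 'a list \<Rightarrow> bool" where
  "is_cycle T vs \<longleftrightarrow> length vs \<ge> 3 \<and> distinct vs \<and>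
     (\<forall>i < length vs. adj T (vs ! i) (vs ! ((i + 1) mod length vs)))"

definition acyclic_graph :: "'a set set \<Rightarrow> bool" where
  "acyclic_graph T \<longleftrightarrow> \<not> (\<exists>vs. is_cycle T vs)"

definition spanning_tree :: "'a set \<Rightarrow> 'a set set \<Rightarrow> bool" where
  "spanning_tree S T \<longleftrightarrow> T \<subseteq> complete_edges S \<and> graph_connected S T \<and> acyclic_graph T"

definition edge_len :: "('a \<Rightarrow> 'a \<Rightarrow> real) \<Rightarrow> 'a set \<Rightarrow> real" where
  "edge_len d e = (THE r. \<exists>x y. e = {x, y} \<and> r = d x y)"

definition tree_energy :: "('a \<Rightarrow> 'a \<Rightarrow> real) \<Rightarrow> real \<Rightarrow> 'a set set \<Rightarrow> real" where
  "tree_energy d p T = (\<Sum>e\<in>T. edge_len d e powr p)"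

definition is_MST :: "('a \<Rightarrow> 'a \<Rightarrow> real) \<Rightarrow> 'a set \<Rightarrow> 'a set set \<Rightarrow> bool" where
  "is_MST d S T \<longleftrightarrow> spanning_tree S T \<and>
     (\<forall>T'. spanning_tree S T' \<longrightarrow> tree_energy d 1 T \<le> tree_energy d 1 T')"

definition dim_MST :: "'a set \<Rightarrow> ('a \<Rightarrow> 'a \<Rightarrow> real) \<Rightarrow> ereal" where
  "dim_MST M d = Inf (ereal ` {p. p \<ge> 0 \<and> (\<exists>C. \<forall>S T. finite S \<and> S \<subseteq> M \<and> is_MST d S T
        \<longrightarrow> tree_energy d p T \<le> C)})"

definition packing_number :: "'a set \<Rightarrow> ('a \<Rightarrow> 'a \<Rightarrow> real) \<Rightarrow> real \<Rightarrow> enat" where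
  "packing_number M d \<epsilon> = Sup {enat (card P) | P. finite P \<and> P \<subseteq> M \<and>
      (\<forall>x\<in>P. \<forall>y\<in>P. x \<noteq> y \<longrightarrow> Metric_space.mball M d x \<epsilon> \<inter> Metric_space.mball M d y \<epsilon> = {})}"

definition box_ratio :: "'a set \<Rightarrow> ('a \<Rightarrow> 'a \<Rightarrow> real) \<Rightarrow> real \<Rightarrow> ereal" where
  "box_ratio M d \<epsilon> = (case packing_number M d \<epsilon> of
       \<infinity> \<Rightarrow> \<infinity>
     | enat n \<Rightarrow> (if n = 0 then - \<infinity> else ereal (ln (real n) / ln (1 / \<epsilon>))))"

definition dim_Box :: "'a set \<Rightarrow> ('a \<Rightarrow> 'a \<Rightarrow> real) \<Rightarrow> ereal" where
  "dim_Box M d = Limsup (at_right 0) (box_ratio M d)"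

end

theory Submission
  imports Defs "HOL-Real_Asymp.Real_Asymp"
begin

text \<open>If the MST energies \<open>E\<^sub>p\<close> on \<open>M\<close> are bounded by \<open>C\<close>, take the centres \<open>P\<close> of \<open>n \<ge> 2\<close> disjoint
  \<open>\<epsilon>\<close>-balls and an MST \<open>T\<close> on \<open>P\<close>. Distinct centres are at distance at least \<open>\<epsilon>\<close>, and every centre
  lies on an edge of \<open>T\<close>, so \<open>T\<close> has at least \<open>n/2\<close> edges, each of length at least \<open>\<epsilon>\<close>. Hence
  \<open>n \<epsilon>\<^sup>p \<le> 2 C\<close>, i.e. \<open>N(\<epsilon>) \<le> 2 C \<epsilon>\<^sup>-\<^sup>p\<close>, and \<open>log N(\<epsilon>) / log (1/\<epsilon>) \<le> p + log (2 C) / log (1/\<epsilon>) \<longrightarrow> p\<close>.\<close>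

lemma finite_complete_edges: "finite S \<Longrightarrow> finite (complete_edges S)"
  by (rule finite_subset[of _ "Pow S"]) (auto simp: complete_edges_def)

lemma adj_star_graph: "adj {{c, x} | x. x \<in> S \<and> x \<noteq> c} a b \<Longrightarrow> c = a \<or> c = b"
  unfolding adj_def by (auto simp: doubleton_eq_iff)

lemma acyclic_star_graph: "acyclic_graph {{c, x} | x. x \<in> S \<and> x \<noteq> c}"
  unfolding acyclic_graph_def
proof
  let ?T = "{{c, x} | x. x \<in> S \<and> x \<noteq> c}"
  assume "\<exists>vs. is_cycle ?T vs"
  then obtain vs where len: "length vs \<ge> 3" and dist: "distinct vs"
    and step: "\<And>i. i < length vs \<Longrightarrow> adj ?T (vs ! i) (vs ! ((i + 1) mod length vs))"
    unfolding is_cycle_def by blast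
  have "vs \<noteq> []" using len by auto
  have three_mod: "3 mod length vs \<noteq> 1" "3 mod length vs < length vs"
    using len by (auto simp: le_eq_less_or_eq)
  \<comment> \<open>every edge contains \<open>c\<close>: the first two edges force \<open>c = vs!1\<close>, which is not on the third\<close>
  have "c = vs!0 \<or> c = vs!1" "c = vs!1 \<or> c = vs!2" "c = vs!2 \<or> c = vs!(3 mod length vs)"
    using \<open>vs \<noteq> []\<close> adj_star_graph[OF step[of 0]] adj_star_graph[OF step[of 1]] adj_star_graph[OF step[of 2]]
      len by (simp_all add: eval_nat_numeral)
  moreover have "vs!0 \<noteq> vs!2" "vs!1 \<noteq> vs!2" "vs!1 \<noteq> vs!(3 mod length vs)"
    using nth_eq_iff_index_eq[OF dist, of 0 2] nth_eq_iff_index_eq[OF dist, of 1 2]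
      nth_eq_iff_index_eq[OF dist, of 1 "3 mod length vs"] \<open>vs \<noteq> []\<close> len three_mod by auto
  ultimately show False by auto
qed

lemma spanning_tree_star_graph:
  assumes "c \<in> S"
  shows "spanning_tree S {{c, x} | x. x \<in> S \<and> x \<noteq> c}" (is "spanning_tree S ?T")
proof -
  have to_centre: "(adj ?T)\<^sup>*\<^sup>* x c" if "x \<in> S" for x
  proof (cases "x = c")
    case False
    then have "adj ?T x c" using that unfolding adj_def by (auto simp: insert_commute)
    then show ?thesis by blast
  qed simp
  have from_centre: "(adj ?T)\<^sup>*\<^sup>* c y" if "y \<in> S" for y
  proof (cases "y = c")
    case False
    then have "adj ?T c y" using that unfolding adj_def by auto
    then show ?thesis by blast
  qed simp
  have "graph_connected S ?T"
    unfolding graph_connected_def using to_centre from_centre by (meson rtranclp_trans)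
  moreover have "?T \<subseteq> complete_edges S"
    using assms unfolding complete_edges_def by blast
  ultimately show ?thesis
    unfolding spanning_tree_def using acyclic_star_graph[of c S] by blast
qed

lemma MST_exists:
  assumes "finite S" "S \<noteq> {}"
  obtains T where "is_MST d S T"
proof -
  let ?trees = "{T. spanning_tree S T}"
  have "finite ?trees"
    by (rule finite_subset[of _ "Pow (complete_edges S)"])
      (auto simp: spanning_tree_def finite_complete_edges assms(1))
  moreover obtain c where "c \<in> S" using assms(2) by blast
  then have "?trees \<noteq> {}" using spanning_tree_star_graph[of c S] by blast
  ultimately obtain T where "is_arg_min (tree_energy d 1) (\<lambda>T. T \<in> ?trees) T"
    using ex_is_arg_min_if_finite by blast
  then show thesis
    by (intro that) (auto simp: is_MST_def is_arg_min_def not_less)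
qed

lemma spanning_tree_vertex_in_edge:
  assumes "spanning_tree S T" "x \<in> S" "y \<in> S" "x \<noteq> y"
  shows "x \<in> \<Union>T"
proof -
  have "(adj T)\<^sup>*\<^sup>* x y"
    using assms unfolding spanning_tree_def graph_connected_def by blast
  then obtain z where "adj T x z"
    using assms(4) by (metis converse_rtranclpE)
  then show ?thesis unfolding adj_def by blast
qed

lemma card_le_twice_card_spanning_tree:
  assumes T: "spanning_tree S T" and S: "finite S" "2 \<le> card S"
  shows "card S \<le> 2 * card T"
proof -
  have edges: "T \<subseteq> complete_edges S" using T unfolding spanning_tree_def by blast
  then have "finite T" using finite_complete_edges[OF S(1)] finite_subset by blast
  have card_edge: "card e = 2" if "e \<in> T" for e
    using edges that unfolding complete_edges_def by auto
  have "S \<subseteq> \<Union>T"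
  proof
    fix x assume x: "x \<in> S"
    have "\<not> S \<subseteq> {x}" using card_mono[of "{x}" S] S(2) by auto
    then show "x \<in> \<Union>T" using spanning_tree_vertex_in_edge[OF T x] by blast
  qed
  moreover have "finite (\<Union>T)"
    using \<open>finite T\<close> card_edge by (metis card.infinite finite_Union zero_neq_numeral)
  ultimately have "card S \<le> card (\<Union>T)" by (rule card_mono[rotated])
  also have "\<dots> \<le> (\<Sum>e\<in>T. card e)" by (rule card_Union_le_sum_card)
  also have "\<dots> = 2 * card T" using card_edge by simp
  finally show ?thesis .
qed

lemma edge_len_doubleton:
  assumes "\<And>a b. d a b = d b a"
  shows "edge_len d {x, y} = d x y"
  unfolding edge_len_def by (rule the_equality) (auto simp: doubleton_eq_iff assms)

lemma card_mult_le_tree_energy: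
  assumes "\<And>e. e \<in> T \<Longrightarrow> \<epsilon> \<le> edge_len d e" "0 \<le> \<epsilon>" "0 \<le> p"
  shows "real (card T) * \<epsilon> powr p \<le> tree_energy d p T"
proof -
  have "real (card T) * \<epsilon> powr p = (\<Sum>e\<in>T. \<epsilon> powr p)" by simp
  also have "\<dots> \<le> (\<Sum>e\<in>T. edge_len d e powr p)"
    by (rule sum_mono) (use assms in \<open>simp add: powr_mono2\<close>)
  finally show ?thesis unfolding tree_energy_def .
qed

definition packing :: "'a set \<Rightarrow> ('a \<Rightarrow> 'a \<Rightarrow> real) \<Rightarrow> real \<Rightarrow> 'a set \<Rightarrow> bool" where
  "packing M d \<epsilon> P \<longleftrightarrow> finite P \<and> P \<subseteq> M \<and>
     (\<forall>x\<in>P. \<forall>y\<in>P. x \<noteq> y \<longrightarrow> Metric_space.mball M d x \<epsilon> \<inter> Metric_space.mball M d y \<epsilon> = {})"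

definition MST_energy_bounded :: "'a set \<Rightarrow> ('a \<Rightarrow> 'a \<Rightarrow> real) \<Rightarrow> real \<Rightarrow> real \<Rightarrow> bool" where
  "MST_energy_bounded M d p C \<longleftrightarrow>
     (\<forall>S T. finite S \<and> S \<subseteq> M \<and> is_MST d S T \<longrightarrow> tree_energy d p T \<le> C)"

lemma (in Metric_space) packing_dist_ge:
  assumes "packing M d \<epsilon> P" "x \<in> P" "y \<in> P" "x \<noteq> y"
  shows "\<epsilon> \<le> d x y"
proof (rule ccontr)
  assume "\<not> \<epsilon> \<le> d x y"
  then have "d x y < \<epsilon>" "0 < \<epsilon>" using nonneg[of x y] by linarith+
  moreover have "x \<in> M" "y \<in> M" using assms unfolding packing_def by auto
  ultimately have "y \<in> mball x \<epsilon> \<inter> mball y \<epsilon>" by simp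
  then show False using assms unfolding packing_def by blast
qed

lemma (in Metric_space) card_packing_le:
  assumes bounded: "MST_energy_bounded M d p C" and "0 \<le> p" "0 < \<epsilon>"
    and P: "packing M d \<epsilon> P" "2 \<le> card P"
  shows "real (card P) * \<epsilon> powr p \<le> 2 * C"
proof -
  have "finite P" "P \<subseteq> M" using P(1) unfolding packing_def by auto
  moreover have "P \<noteq> {}" using P(2) by auto
  ultimately obtain T where T: "is_MST d P T" using MST_exists by blast
  then have sp: "spanning_tree P T" unfolding is_MST_def by blast
  have "\<epsilon> \<le> edge_len d e" if e: "e \<in> T" for e
  proof -
    obtain x y where "e = {x, y}" "x \<in> P" "y \<in> P" "x \<noteq> y"
      using sp e unfolding spanning_tree_def complete_edges_def by blast
    then show ?thesis using packing_dist_ge[OF P(1)] edge_len_doubleton[of d x y] commute by simp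
  qed
  then have "real (card T) * \<epsilon> powr p \<le> C"
    using card_mult_le_tree_energy[of T \<epsilon> d p] bounded T \<open>finite P\<close> \<open>P \<subseteq> M\<close> \<open>0 \<le> p\<close> \<open>0 < \<epsilon>\<close>
    unfolding MST_energy_bounded_def by fastforce
  moreover have "real (card P) \<le> 2 * real (card T)"
    using card_le_twice_card_spanning_tree[OF sp \<open>finite P\<close> P(2)] by linarith
  then have "real (card P) * \<epsilon> powr p \<le> 2 * (real (card T) * \<epsilon> powr p)"
    by (metis mult.assoc mult_right_mono powr_ge_zero)
  ultimately show ?thesis by linarith
qed

lemma box_ratio_le:
  assumes "0 < \<epsilon>" "\<epsilon> < 1" "1 \<le> B" and card_le: "\<And>P. packing M d \<epsilon> P \<Longrightarrow> real (card P) \<le> B"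
  shows "box_ratio M d \<epsilon> \<le> ereal (ln B / ln (1 / \<epsilon>))"
proof -
  have "packing_number M d \<epsilon> \<le> enat (nat \<lfloor>B\<rfloor>)"
    unfolding packing_number_def
  proof (rule Sup_least, clarify)
    fix P assume "finite P" "P \<subseteq> M"
      "\<forall>x\<in>P. \<forall>y\<in>P. x \<noteq> y \<longrightarrow> Metric_space.mball M d x \<epsilon> \<inter> Metric_space.mball M d y \<epsilon> = {}"
    then have "real (card P) \<le> B" by (intro card_le) (simp add: packing_def)
    then show "enat (card P) \<le> enat (nat \<lfloor>B\<rfloor>)" by simp linarith
  qed
  then obtain n where n: "packing_number M d \<epsilon> = enat n" "n \<le> nat \<lfloor>B\<rfloor>"
    by (metis enat_ile enat_ord_simps(1))
  then have "real n \<le> B" using assms(3) by linarith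
  show ?thesis
  proof (cases "n = 0")
    case False
    then have "ln (real n) \<le> ln B" using \<open>real n \<le> B\<close> by simp
    then show ?thesis
      unfolding box_ratio_def using n(1) False assms(1,2) by (simp add: divide_right_mono)
  qed (simp add: box_ratio_def n(1))
qed

lemma (in Metric_space) box_ratio_le_MST_exponent:
  assumes "MST_energy_bounded M d p C" "0 \<le> p" "0 < \<epsilon>" "\<epsilon> < 1"
  shows "box_ratio M d \<epsilon> \<le> ereal (p + ln (2 * max C 1) / ln (1 / \<epsilon>))"
proof -
  define B where "B = 2 * max C 1 * \<epsilon> powr (- p)"
  have "\<epsilon> powr p \<le> 1" using assms(2-4) by (intro powr_le1) auto
  then have "1 \<le> \<epsilon> powr (- p)"
    using assms(3) by (simp add: powr_minus_divide)
  moreover have "2 \<le> 2 * max C 1" by simp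
  ultimately have "2 \<le> B"
    unfolding B_def using mult_mono[of 2 "2 * max C 1" 1 "\<epsilon> powr (- p)"] by simp
  have card_le: "real (card P) \<le> B" if "packing M d \<epsilon> P" for P
  proof (cases "2 \<le> card P")
    case True
    have "MST_energy_bounded M d p (max C 1)"
      using assms(1) unfolding MST_energy_bounded_def by force
    from card_packing_le[OF this assms(2,3) that True] show ?thesis
      unfolding B_def using assms(3) by (simp add: powr_minus_divide field_simps)
  qed (use \<open>2 \<le> B\<close> in simp)
  then have "box_ratio M d \<epsilon> \<le> ereal (ln B / ln (1 / \<epsilon>))"
    by (intro box_ratio_le) (use card_le assms(3,4) \<open>2 \<le> B\<close> in auto)
  also have "ln B / ln (1 / \<epsilon>) = p + ln (2 * max C 1) / ln (1 / \<epsilon>)"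
    unfolding B_def using assms(3,4) by (simp add: ln_mult ln_div field_simps)
  finally show ?thesis .
qed

theorem lemma5:
  fixes M :: "'a set" and d :: "'a \<Rightarrow> 'a \<Rightarrow> real"
  assumes "Metric_space M d"
  shows "dim_Box M d \<le> dim_MST M d"
  unfolding dim_MST_def
proof (rule Inf_greatest, clarify)
  fix p C assume p: "p \<ge> 0"
    and "\<forall>S T. finite S \<and> S \<subseteq> M \<and> is_MST d S T \<longrightarrow> tree_energy d p T \<le> C"
  from this(2) have bounded: "MST_energy_bounded M d p C" unfolding MST_energy_bounded_def .
  define K where "K = ln (2 * max C 1)"
  have "eventually (\<lambda>\<epsilon>::real. 0 < \<epsilon> \<and> \<epsilon> < 1) (at_right 0)"
    by (simp add: eventually_at_right_field) (meson zero_less_one)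
  then have "eventually (\<lambda>\<epsilon>. box_ratio M d \<epsilon> \<le> ereal (p + K / ln (1 / \<epsilon>))) (at_right 0)"
    by eventually_elim
      (use Metric_space.box_ratio_le_MST_exponent[OF assms bounded p] K_def in auto)
  then have "dim_Box M d \<le> Limsup (at_right 0) (\<lambda>\<epsilon>. ereal (p + K / ln (1 / \<epsilon>)))"
    unfolding dim_Box_def by (rule Limsup_mono)
  also have "\<dots> = ereal p"
  proof (rule lim_imp_Limsup)
    have "((\<lambda>\<epsilon>::real. p + K / ln (1 / \<epsilon>)) \<longlongrightarrow> p) (at_right 0)" by real_asymp
    then show "((\<lambda>\<epsilon>. ereal (p + K / ln (1 / \<epsilon>))) \<longlongrightarrow> ereal p) (at_right 0)" by auto
  qed simp
  finally show "dim_Box M d \<le> ereal p" .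
qed

end
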